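(* Let $\Omega\subset\mathbb{C}^n$ be an open connected subset and $f_m\colon\Omega\to\mathbb{C}^n$ ($m\in\mathbb{N}$) holomorphic maps converging locally uniformly to $\mathrm{id}|_\Omega$. Let $D>0$ be an integer and $\Omega'\subset\Omega$ a non-empty open relatively compact subset such that $(f_m)^i(\overline{\Omega'})\subseteq\Omega$ for $i=1,\dots,D$ and all $m$, and $(f_m)^D=\mathrm{id}$ on $\Omega'$ for all $m$. Then for each $m\gg0$ there is a non-empty compact convex subset $B_m\subset\Omega'$ with $f_m(B_m)=B_m$. *)

theory Defs
  imports "HOL-Analysis.Analysis"
begin

definition complex_linear :: "(complex ^ 'n \<Rightarrow> complex ^ 'm) \<Rightarrow> bool" where
  "complex_linear L \<longleftrightarrow> linear L \<and> (\<forall>c v. L (c *s v) = c *s L v)"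

definition holo_on :: "(complex ^ 'n \<Rightarrow> complex ^ 'm) \<Rightarrow> (complex ^ 'n) set \<Rightarrow> bool" where
  "holo_on f S \<longleftrightarrow> (\<forall>z\<in>S. \<exists>L. complex_linear L \<and> (f has_derivative L) (at z))"

definition locally_uniform_limit ::
  "'a::metric_space set \<Rightarrow> (nat \<Rightarrow> 'a \<Rightarrow> 'b::metric_space) \<Rightarrow> ('a \<Rightarrow> 'b) \<Rightarrow> bool" where
  "locally_uniform_limit S f g \<longleftrightarrow>
     (\<forall>x\<in>S. \<exists>e>0. uniform_limit (S \<inter> cball x e) f g sequentially)"

end

theory Submission
  imports Defs "HOL-Complex_Analysis.Cauchy_Integral_Formula"
begin

(* Fix a closed ball around a point p of \<Omega>'.  For m large, h = f_m moves the points of that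
   ball by less than a small \<epsilon>, and we show that h is then the identity near p, so any small
   closed ball around p can serve as B_m.  Since h^D = id, the mean displacement
   g = (1/D) \<Sigma>_{i<D} (h^i - id) satisfies g x - g (h x) = h x - x.  But g is holomorphic and
   bounded by D \<epsilon> on the ball, so by the Cauchy estimates it is a contraction there, whence
   |h x - x| \<le> |h x - x| / 2, i.e. h x = x. *)

lemma norm_le_sum_norm_nth: "norm (v :: 'a::real_normed_vector ^ 'n) \<le> (\<Sum>i\<in>UNIV. norm (v $ i))"
  by (simp add: norm_vec_def L2_set_le_sum)

lemma norm_vector_scalar_mult:
  "norm (c *s (v :: 'a::real_normed_div_algebra ^ 'n)) = norm c * norm v"
  by (simp add: norm_vec_def norm_mult L2_set_right_distrib)

lemma bounded_linear_vector_scalar_mult_left: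
  "bounded_linear (\<lambda>t::complex. t *s (v :: complex ^ 'n))"
  by (simp add: linear_conv_bounded_linear[symmetric] linearI vec_eq_iff algebra_simps)

lemma complex_linear_ident: "complex_linear (\<lambda>x. x)"
  unfolding complex_linear_def by (simp add: linear_id[unfolded id_def])

lemma complex_linear_compose:
  "complex_linear L \<Longrightarrow> complex_linear M \<Longrightarrow> complex_linear (M \<circ> L)"
  unfolding complex_linear_def by (auto intro: linear_compose)

lemma complex_linear_sum:
  "(\<And>i. i \<in> I \<Longrightarrow> complex_linear (L i)) \<Longrightarrow> complex_linear (\<lambda>v. \<Sum>i\<in>I. L i v)"
  unfolding complex_linear_def
  by (cases "finite I") (auto intro!: linear_compose_sum linear_zero simp: vec_eq_iff sum_distrib_left)

lemma complex_linear_diff: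
  "complex_linear L \<Longrightarrow> complex_linear M \<Longrightarrow> complex_linear (\<lambda>v. L v - M v)"
  unfolding complex_linear_def by (auto intro!: linear_compose_sub simp: vector_ssub_ldistrib)

lemma complex_linear_scaleR:
  "complex_linear L \<Longrightarrow> complex_linear (\<lambda>v. a *\<^sub>R L v)"
  unfolding complex_linear_def
  by (auto intro!: linearI simp: linear_add linear_scale scaleR_right_distrib vec_eq_iff)

lemma holo_on_subset: "holo_on f S \<Longrightarrow> T \<subseteq> S \<Longrightarrow> holo_on f T"
  unfolding holo_on_def by blast

lemma holo_on_ident: "holo_on (\<lambda>x. x) S"
  unfolding holo_on_def using complex_linear_ident has_derivative_ident by blast

lemma holo_on_compose:
  assumes "holo_on f S" "holo_on g T" "f ` S \<subseteq> T"
  shows "holo_on (g \<circ> f) S"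
  unfolding holo_on_def
proof
  fix z assume "z \<in> S"
  then obtain L M where "complex_linear L" "(f has_derivative L) (at z)"
    "complex_linear M" "(g has_derivative M) (at (f z))"
    using assms unfolding holo_on_def by blast
  then show "\<exists>N. complex_linear N \<and> (g \<circ> f has_derivative N) (at z)"
    by (blast intro: complex_linear_compose diff_chain_at)
qed

lemma holo_on_funpow:
  assumes "holo_on h S" "\<And>i. i < n \<Longrightarrow> (h ^^ i) ` T \<subseteq> S"
  shows "holo_on (h ^^ n) T"
  using assms(2)
proof (induction n)
  case 0
  then show ?case by (simp add: id_def holo_on_ident)
next
  case (Suc n)
  then have "holo_on (h \<circ> (h ^^ n)) T"
    by (intro holo_on_compose[OF _ assms(1)]) auto
  then show ?case by (simp only: funpow.simps(2))
qed

lemma holo_on_sum: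
  assumes "\<And>i. i \<in> I \<Longrightarrow> holo_on (f i) S"
  shows "holo_on (\<lambda>x. \<Sum>i\<in>I. f i x) S"
  unfolding holo_on_def
proof
  fix z assume "z \<in> S"
  with assms have "\<forall>i\<in>I. \<exists>L. complex_linear L \<and> (f i has_derivative L) (at z)"
    unfolding holo_on_def by blast
  then obtain L where "\<And>i. i \<in> I \<Longrightarrow> complex_linear (L i) \<and> (f i has_derivative L i) (at z)"
    by metis
  then show "\<exists>L. complex_linear L \<and> ((\<lambda>x. \<Sum>i\<in>I. f i x) has_derivative L) (at z)"
    by (blast intro: complex_linear_sum has_derivative_sum)
qed

lemma holo_on_diff: "holo_on f S \<Longrightarrow> holo_on g S \<Longrightarrow> holo_on (\<lambda>x. f x - g x) S"
  unfolding holo_on_def by (blast intro: complex_linear_diff has_derivative_diff)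

lemma holo_on_scaleR: "holo_on f S \<Longrightarrow> holo_on (\<lambda>x. a *\<^sub>R f x) S"
  unfolding holo_on_def by (blast intro: complex_linear_scaleR has_derivative_scaleR_right)

lemma has_field_derivative_along_line:
  fixes g :: "complex ^ 'n \<Rightarrow> complex ^ 'm"
  assumes "(g has_derivative L) (at (z + t *s v))" "complex_linear L"
  shows "((\<lambda>t. g (z + t *s v) $ k) has_field_derivative (L v $ k)) (at t)"
proof -
  have "((\<lambda>t. z + t *s v) has_derivative (\<lambda>s. s *s v)) (at t)"
    using has_derivative_add[OF has_derivative_const
        bounded_linear_imp_has_derivative[OF bounded_linear_vector_scalar_mult_left]]
    by simp
  from diff_chain_at[OF this assms(1)]
  have "((\<lambda>t. g (z + t *s v) $ k) has_derivative (\<lambda>s. L (s *s v) $ k)) (at t)"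
    by (intro bounded_linear.has_derivative[OF bounded_linear_vec_nth]) (simp add: o_def)
  moreover have "L (s *s v) $ k = (L v $ k) * s" for s
    using assms(2) unfolding complex_linear_def by (simp add: mult.commute)
  ultimately show ?thesis by (simp add: has_field_derivative_def)
qed

lemma holo_on_derivative_bound:
  fixes g :: "complex ^ 'n \<Rightarrow> complex ^ 'm"
  assumes hol: "holo_on g (cball z r)" and "r > 0"
    and bound: "\<And>w. w \<in> cball z r \<Longrightarrow> norm (g w) \<le> M"
    and G: "complex_linear G" "(g has_derivative G) (at z)"
  shows "norm (G v) \<le> real CARD('m) * M / r * norm v"
proof (cases "v = 0")
  case True
  then show ?thesis
    using G(1) linear_0 unfolding complex_linear_def by fastforce
next
  case False
  define \<rho> where "\<rho> = r / norm v"
  have "\<rho> > 0" using False \<open>r > 0\<close> by (simp add: \<rho>_def)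
  have on_line: "z + t *s v \<in> cball z r" if "norm t \<le> \<rho>" for t
    using that False by (simp add: dist_norm norm_vector_scalar_mult \<rho>_def pos_le_divide_eq)
  have component: "norm (G v $ k) \<le> M / r * norm v" for k
  proof -
    \<comment> \<open>one-variable Cauchy estimate on the complex line through z in direction v\<close>
    define \<phi> where "\<phi> = (\<lambda>t. g (z + t *s v) $ k)"
    have diff: "\<phi> field_differentiable at t" if "norm t \<le> \<rho>" for t
      using hol on_line[OF that] has_field_derivative_along_line
      unfolding holo_on_def \<phi>_def field_differentiable_def by blast
    have "norm ((deriv ^^ 1) \<phi> 0) \<le> fact 1 * M / \<rho> ^ 1"
    proof (rule Cauchy_inequality[OF _ _ \<open>\<rho> > 0\<close>])
      show "\<phi> holomorphic_on ball 0 \<rho>"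
        using diff by (auto simp: holomorphic_on_def intro: field_differentiable_at_within)
      show "continuous_on (cball 0 \<rho>) \<phi>"
        using diff by (auto intro!: continuous_at_imp_continuous_on field_differentiable_imp_continuous_at)
      show "norm (\<phi> t) \<le> M" if "norm (0 - t) = \<rho>" for t
        using that Finite_Cartesian_Product.norm_nth_le[of "g (z + t *s v)" k] bound[OF on_line, of t]
        by (simp add: \<phi>_def)
    qed
    moreover have "deriv \<phi> 0 = G v $ k"
      using has_field_derivative_along_line[of g G z 0 v k] G unfolding \<phi>_def
      by (auto intro: DERIV_imp_deriv)
    ultimately show ?thesis using False by (simp add: \<rho>_def)
  qed
  have "norm (G v) \<le> (\<Sum>k\<in>UNIV. norm (G v $ k))" by (rule norm_le_sum_norm_nth)
  also have "\<dots> \<le> real CARD('m) * (M / r * norm v)"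
    by (rule sum_bounded_above) (use component in auto)
  finally show ?thesis by simp
qed

lemma bounded_holo_on_lipschitz:
  fixes g :: "complex ^ 'n \<Rightarrow> complex ^ 'm"
  assumes hol: "holo_on g (ball p (2 * r))"
    and bound: "\<And>w. w \<in> ball p (2 * r) \<Longrightarrow> norm (g w) \<le> M"
    and "x \<in> ball p r" "y \<in> ball p r"
  shows "norm (g x - g y) \<le> real CARD('m) * M / r * norm (x - y)"
proof -
  have "r > 0" using \<open>x \<in> ball p r\<close> by (metis mem_ball zero_le_dist order_le_less_trans)
  have "ball p r \<subseteq> ball p (2 * r)"
    using \<open>r > 0\<close> by (intro subset_ball) simp
  then have "\<forall>z\<in>ball p r. \<exists>L. complex_linear L \<and> (g has_derivative L) (at z)"
    using hol unfolding holo_on_def by blast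
  then obtain G where G: "\<And>z. z \<in> ball p r \<Longrightarrow> complex_linear (G z) \<and> (g has_derivative G z) (at z)"
    by metis
  show ?thesis
  proof (rule differentiable_bound[OF convex_ball _ _ assms(3,4)])
    fix z assume "z \<in> ball p r"
    then have "cball z r \<subseteq> ball p (2 * r)"
      unfolding subset_eq mem_ball mem_cball by metric
    then show "onorm (G z) \<le> real CARD('m) * M / r"
      using G[OF \<open>z \<in> ball p r\<close>] holo_on_derivative_bound[OF holo_on_subset[OF hol] \<open>r > 0\<close>] bound
      by (intro onorm_le) blast
    show "(g has_derivative G z) (at z within ball p r)"
      using G[OF \<open>z \<in> ball p r\<close>] by (auto intro: has_derivative_at_withinI)
  qed
qed

lemma uniform_limit_on_compact_if_locally_uniform_limit:
  assumes "locally_uniform_limit S f g" "compact K" "K \<subseteq> S"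
  shows "uniform_limit K f g sequentially"
proof -
  have "\<forall>x\<in>K. \<exists>e. e > 0 \<and> uniform_limit (S \<inter> cball x e) f g sequentially"
    using assms(1,3) unfolding locally_uniform_limit_def by blast
  then obtain e where e: "\<forall>x\<in>K. e x > 0 \<and> uniform_limit (S \<inter> cball x (e x)) f g sequentially"
    by (rule bchoice[elim_format]) blast
  then have "K \<subseteq> (\<Union>x\<in>K. ball x (e x))"
    using centre_in_ball by blast
  then obtain K' where K': "K' \<subseteq> K" "finite K'" "K \<subseteq> (\<Union>x\<in>K'. ball x (e x))"
    by (rule compactE_image[OF assms(2) open_ball])
  then have "uniform_limit (\<Union>x\<in>K'. S \<inter> cball x (e x)) f g sequentially"
    using e by (intro uniform_limit_on_UNION) auto
  moreover have "K \<subseteq> (\<Union>x\<in>K'. S \<inter> cball x (e x))"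
  proof
    fix y assume "y \<in> K"
    then obtain x where "x \<in> K'" "y \<in> ball x (e x)"
      using K'(3) by blast
    then show "y \<in> (\<Union>x\<in>K'. S \<inter> cball x (e x))"
      using \<open>y \<in> K\<close> assms(3) by (auto intro: less_imp_le)
  qed
  ultimately show ?thesis by (rule uniform_limit_on_subset)
qed

lemma dist_funpow_le:
  fixes h :: "'a::metric_space \<Rightarrow> 'a"
  assumes step: "\<And>y. dist x y \<le> real n * \<epsilon> \<Longrightarrow> dist (h y) y \<le> \<epsilon>"
    and "\<epsilon> \<ge> 0" and "i \<le> n"
  shows "dist ((h ^^ i) x) x \<le> real i * \<epsilon>"
  using \<open>i \<le> n\<close>
proof (induction i)
  case 0
  then show ?case by simp
next
  case (Suc i)
  then have IH: "dist ((h ^^ i) x) x \<le> real i * \<epsilon>" by simp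
  moreover have "real i * \<epsilon> \<le> real n * \<epsilon>"
    using Suc.prems \<open>\<epsilon> \<ge> 0\<close> by (intro mult_right_mono) auto
  ultimately have "dist (h ((h ^^ i) x)) ((h ^^ i) x) \<le> \<epsilon>"
    by (intro step) (simp add: dist_commute)
  then show ?case
    using IH dist_triangle[of "(h ^^ Suc i) x" x "(h ^^ i) x"] by (simp add: algebra_simps)
qed

lemma sum_funpow_shift_if_periodic:
  fixes h :: "'a::cancel_comm_monoid_add \<Rightarrow> 'a"
  assumes "(h ^^ n) x = x"
  shows "(\<Sum>i<n. (h ^^ i) (h x)) = (\<Sum>i<n. (h ^^ i) x)"
proof -
  have "(\<Sum>i<n. (h ^^ i) (h x)) + x = (\<Sum>i<n. (h ^^ Suc i) x) + (h ^^ 0) x"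
    by (simp add: funpow_Suc_right del: funpow.simps)
  also have "\<dots> = (\<Sum>i<Suc n. (h ^^ i) x)"
    by (simp only: sum.lessThan_Suc_shift add.commute)
  also have "\<dots> = (\<Sum>i<n. (h ^^ i) x) + x"
    by (simp only: sum.lessThan_Suc assms)
  finally show ?thesis
    by (simp only: add_right_cancel)
qed

definition mean_displacement :: "('a::real_vector \<Rightarrow> 'a) \<Rightarrow> nat \<Rightarrow> 'a \<Rightarrow> 'a" where
  "mean_displacement h n x = (1 / real n) *\<^sub>R (\<Sum>i<n. (h ^^ i) x - x)"

lemma mean_displacement_shift:
  fixes h :: "'a::real_vector \<Rightarrow> 'a"
  assumes "(h ^^ n) x = x" "n > 0"
  shows "mean_displacement h n x - mean_displacement h n (h x) = h x - x"
proof -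
  have sums: "(\<Sum>i<n. (h ^^ i) x - x) - (\<Sum>i<n. (h ^^ i) (h x) - h x) = real n *\<^sub>R (h x - x)"
    using sum_funpow_shift_if_periodic[OF assms(1)]
    by (simp add: sum_subtractf sum_constant_scaleR scaleR_diff_right del: sum_constant)
  have "mean_displacement h n x - mean_displacement h n (h x) =
      (1 / real n) *\<^sub>R ((\<Sum>i<n. (h ^^ i) x - x) - (\<Sum>i<n. (h ^^ i) (h x) - h x))"
    by (simp only: mean_displacement_def scaleR_diff_right)
  also have "\<dots> = h x - x"
    using \<open>n > 0\<close> by (simp only: sums) simp
  finally show ?thesis .
qed

lemma norm_mean_displacement_le:
  fixes h :: "'a::real_normed_vector \<Rightarrow> 'a"
  assumes "\<And>i. i < n \<Longrightarrow> norm ((h ^^ i) x - x) \<le> M" "n > 0"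
  shows "norm (mean_displacement h n x) \<le> M"
proof -
  have "norm (mean_displacement h n x) \<le> (1 / real n) * (\<Sum>i<n. norm ((h ^^ i) x - x))"
    unfolding mean_displacement_def by (simp add: divide_right_mono norm_sum)
  also have "\<dots> \<le> (1 / real n) * (real n * M)"
    using sum_bounded_above[of "{..<n}" "\<lambda>i. norm ((h ^^ i) x - x)"] assms(1)
    by (intro mult_left_mono) auto
  also have "\<dots> = M"
    using \<open>n > 0\<close> by simp
  finally show ?thesis .
qed

lemma holo_on_mean_displacement:
  "(\<And>i. i < n \<Longrightarrow> holo_on (h ^^ i) S) \<Longrightarrow> holo_on (mean_displacement h n) S"
  unfolding mean_displacement_def[abs_def]
  by (intro holo_on_scaleR holo_on_sum holo_on_diff holo_on_ident) simp

lemma periodic_holo_near_id_is_id: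
  fixes h :: "complex ^ 'n \<Rightarrow> complex ^ 'n"
  assumes "D > 0" "r > 0" "\<epsilon> \<ge> 0"
    and holo: "\<And>i. i < D \<Longrightarrow> holo_on (h ^^ i) U"
    and periodic: "\<And>x. x \<in> U \<Longrightarrow> (h ^^ D) x = x"
    and close: "\<And>y. y \<in> cball p (3 * r) \<Longrightarrow> dist (h y) y \<le> \<epsilon>"
    and "cball p (3 * r) \<subseteq> U"
    and small: "4 * real CARD('n) * real D * \<epsilon> \<le> r"
    and x: "x \<in> ball p (r / 2)"
  shows "h x = x"
proof -
  have D\<epsilon>: "real D * \<epsilon> \<le> r / 4" "real CARD('n) * (real D * \<epsilon>) / r \<le> 1 / 2"
    using small mult_right_mono[of 1 "real CARD('n)" "real D * \<epsilon>"] \<open>r > 0\<close> \<open>\<epsilon> \<ge> 0\<close>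
    by (simp_all add: pos_divide_le_eq)
  define g where "g = mean_displacement h D"
  have "ball p (2 * r) \<subseteq> U"
    using \<open>cball p (3 * r) \<subseteq> U\<close> \<open>r > 0\<close> by (auto simp: subset_eq)
  then have g_holo: "holo_on g (ball p (2 * r))"
    unfolding g_def by (intro holo_on_mean_displacement holo_on_subset[OF holo])
  have g_small: "norm (g w) \<le> real D * \<epsilon>" if "w \<in> ball p (2 * r)" for w
    unfolding g_def
  proof (rule norm_mean_displacement_le[OF _ \<open>D > 0\<close>])
    fix i assume "i < D"
    have "cball w (real D * \<epsilon>) \<subseteq> cball p (3 * r)"
      using that D\<epsilon>(1) \<open>r > 0\<close> by (simp add: cball_subset_cball_iff dist_commute)
    then have "dist ((h ^^ i) w) w \<le> real i * \<epsilon>"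
      using close \<open>i < D\<close> by (intro dist_funpow_le[OF _ \<open>\<epsilon> \<ge> 0\<close>]) auto
    also have "\<dots> \<le> real D * \<epsilon>"
      using \<open>i < D\<close> \<open>\<epsilon> \<ge> 0\<close> by (intro mult_right_mono) auto
    finally show "norm ((h ^^ i) w - w) \<le> real D * \<epsilon>"
      by (simp add: dist_norm)
  qed
  have contraction: "norm (g y - g z) \<le> 1 / 2 * norm (y - z)"
    if "y \<in> ball p r" "z \<in> ball p r" for y z
    using bounded_holo_on_lipschitz[OF g_holo g_small that] mult_right_mono[OF D\<epsilon>(2) norm_ge_zero]
    by (rule order_trans)
  have "\<epsilon> \<le> real D * \<epsilon>"
    using \<open>D > 0\<close> \<open>\<epsilon> \<ge> 0\<close> by (simp add: mult_le_cancel_right1)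
  moreover have "dist (h x) x \<le> \<epsilon>"
    using x \<open>r > 0\<close> by (intro close) simp
  ultimately have "h x \<in> ball p r" "x \<in> ball p r"
    using x \<open>r > 0\<close> D\<epsilon>(1) dist_triangle[of p "h x" x] by (simp_all add: dist_commute)
  moreover have "g x - g (h x) = h x - x"
    unfolding g_def using \<open>D > 0\<close> \<open>cball p (3 * r) \<subseteq> U\<close> \<open>x \<in> ball p r\<close> \<open>r > 0\<close>
    by (intro mean_displacement_shift periodic) auto
  ultimately have "norm (h x - x) \<le> 1 / 2 * norm (h x - x)"
    using contraction by (metis norm_minus_commute)
  then show ?thesis by simp
qed

theorem lemma3p9:
  fixes \<Omega> \<Omega>' :: "(complex ^ 'n) set"
    and f :: "nat \<Rightarrow> complex ^ 'n \<Rightarrow> complex ^ 'n"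
    and D :: nat
  assumes "open \<Omega>" and "connected \<Omega>"
    and "\<And>m. holo_on (f m) \<Omega>"
    and "locally_uniform_limit \<Omega> f id"
    and "D > 0"
    and "open \<Omega>'" and "\<Omega>' \<noteq> {}" and "\<Omega>' \<subseteq> \<Omega>"
    and "compact (closure \<Omega>')" and "closure \<Omega>' \<subseteq> \<Omega>"
    and "\<And>m i. 1 \<le> i \<Longrightarrow> i \<le> D \<Longrightarrow> (f m ^^ i) ` closure \<Omega>' \<subseteq> \<Omega>"
    and "\<And>m x. x \<in> \<Omega>' \<Longrightarrow> (f m ^^ D) x = x"
  shows "\<forall>\<^sub>F m in sequentially. \<exists>B. B \<noteq> {} \<and> compact B \<and> convex B \<and> B \<subseteq> \<Omega>' \<and> f m ` B = B"
proof -
  obtain p e where "e > 0" "cball p e \<subseteq> \<Omega>'"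
    using \<open>open \<Omega>'\<close> \<open>\<Omega>' \<noteq> {}\<close> open_contains_cball by blast
  define r where "r = e / 3"
  define \<epsilon> where "\<epsilon> = r / (4 * real CARD('n) * real D)"
  have "r > 0" "\<epsilon> > 0" "4 * real CARD('n) * real D * \<epsilon> \<le> r" "cball p (3 * r) \<subseteq> \<Omega>'"
    using \<open>e > 0\<close> \<open>D > 0\<close> \<open>cball p e \<subseteq> \<Omega>'\<close> by (simp_all add: r_def \<epsilon>_def)
  then have "uniform_limit (cball p (3 * r)) f id sequentially"
    using \<open>\<Omega>' \<subseteq> \<Omega>\<close> by (intro uniform_limit_on_compact_if_locally_uniform_limit[OF assms(4)]) auto
  then have "\<forall>\<^sub>F m in sequentially. \<forall>y\<in>cball p (3 * r). dist (f m y) y < \<epsilon>"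
    using \<open>\<epsilon> > 0\<close> by (simp add: uniform_limit_iff)
  then show ?thesis
  proof (rule eventually_mono)
    fix m assume close: "\<forall>y\<in>cball p (3 * r). dist (f m y) y < \<epsilon>"
    have "(f m ^^ i) ` \<Omega>' \<subseteq> \<Omega>" if "i \<le> D" for i
      using that assms(11)[of i m] image_mono[OF closure_subset, of "f m ^^ i" \<Omega>'] \<open>\<Omega>' \<subseteq> \<Omega>\<close>
      by (cases "i = 0") auto
    then have "f m x = x" if "x \<in> ball p (r / 2)" for x
      using close assms(12) \<open>\<epsilon> > 0\<close> \<open>r > 0\<close> that
      by (intro periodic_holo_near_id_is_id[OF \<open>D > 0\<close> _ _ holo_on_funpow[OF assms(3)] _ _
            \<open>cball p (3 * r) \<subseteq> \<Omega>'\<close> \<open>4 * real CARD('n) * real D * \<epsilon> \<le> r\<close>])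
           (auto intro: less_imp_le)
    moreover have "cball p (r / 4) \<subseteq> ball p (r / 2)"
      using \<open>r > 0\<close> by (simp add: cball_subset_ball_iff)
    ultimately have "f m ` cball p (r / 4) = cball p (r / 4)"
      by (simp add: subset_eq)
    moreover have "cball p (r / 4) \<subseteq> \<Omega>'"
      using \<open>r > 0\<close> \<open>cball p (3 * r) \<subseteq> \<Omega>'\<close> by (auto simp: subset_eq)
    ultimately show "\<exists>B. B \<noteq> {} \<and> compact B \<and> convex B \<and> B \<subseteq> \<Omega>' \<and> f m ` B = B"
      using \<open>r > 0\<close> by (intro exI[of _ "cball p (r / 4)"]) simp
  qed
qed

end
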